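(* In the GCSA-NA construction (context), for $l\in[\ell],k\in[K_c]$ let $\mathbf{C}^{l,k}_1,\dots,\mathbf{C}^{l,k}_{R'+p-1}\in\mathbb{F}^{\frac{\lambda}{m}\times\frac{\mu}{n}}$ be defined by $\mathbf{C}^{l,k}_{i+1}=\sum \mathbf{A}^{l,k}_{m',p'}\mathbf{B}^{l,k}_{p'',n''}$, the sum over all $(m',p',p'',n'')\in[m]\times[p]\times[p]\times[n]$ with $p'-1+p(m'-1)+p-p''+pm(n''-1)=i$, so that $P_s^{l,k}Q_s^{l,k}=\sum_{i=0}^{R'+p-2}\mathbf{C}^{l,k}_{i+1}(f_{l,k}-\alpha_s)^i$. Then: (a) For all $m'\in[m],n''\in[n]$, $\mathbf{C}^{l,k}_{p+p(m'-1)+pm(n''-1)}=\sum_{p'\in[p]}\mathbf{A}^{l,k}_{m',p'}\mathbf{B}^{l,k}_{p',n''}$, the $(m',n'')$ block of $\mathbf{A}^{l,k}\mathbf{B}^{l,k}$. (b) There exist matrices $I_1,\dots,I_{R'K_c+2X-1}\in\mathbb{F}^{\frac{\lambda}{m}\times\frac{\mu}{n}}$, not depending on $s$, each a function of $(\mathbf{A},\mathbf{B},\mathbf{Z}^A_{\cdot,\cdot},\mathbf{Z}^B_{\cdot,\cdot})$, with $I_x$ a function of $(\mathbf{Z}^A_{\cdot,\cdot},\mathbf{Z}^B_{\cdot,\cdot})$ alone whenever $x>R'(K_c-1)+X+D_E$, such that for every $s\in[S]$, $$Y_s=\sum_{l\in[\ell]}\sum_{k\in[K_c]}\sum_{i=0}^{R'-1}\frac{\sum_{i'=0}^{i}c_{l,k,i-i'}\mathbf{D}^{l,k}_{i'+1}}{(f_{l,k}-\alpha_s)^{R'-i}}+\sum_{x\in[R'K_c+2X-1]}\alpha_s^{x-1}J_x,$$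 where $\mathbf{D}^{l,k}_i=\mathbf{C}^{l,k}_i+\mathbf{Z}''_{l,k,i}$ for $i\in[R']$, $J_x=I_x+\mathbf{Z}'_x$ for $x\in[R'(K_c-1)+X+D_E]$, and $J_x=I_x$ for $R'(K_c-1)+X+D_E<x\le R'K_c+2X-1$.
   Context: GCSA-NA construction. Let $\mathbb{F}$ be a finite field and $S,X,\ell,K_c,p,m,n,\lambda,\kappa,\mu$ positive integers with $m\mid\lambda$, $p\mid\kappa$, $n\mid\mu$, $L=\ell K_c\le|\mathbb{F}|-S$. Inputs $\mathbf{A}^{l,k}\in\mathbb{F}^{\lambda\times\kappa}$, $\mathbf{B}^{l,k}\in\mathbb{F}^{\kappa\times\mu}$ ($l\in[\ell],k\in[K_c]$). Partition $\mathbf{A}^{l,k}$ into an $m\times p$ grid of blocks $\mathbf{A}^{l,k}_{i,j}\in\mathbb{F}^{\frac{\lambda}{m}\times\frac{\kappa}{p}}$ and $\mathbf{B}^{l,k}$ into a $p\times n$ grid of blocks $\mathbf{B}^{l,k}_{i,j}\in\mathbb{F}^{\frac{\kappa}{p}\times\frac{\mu}{n}}$. Fix $S+L$ distinct elements $f_{1,1},\dots,f_{\ell,K_c},\alpha_1,\dots,\alpha_S\in\mathbb{F}$. Let $R'=pmn$, $D_E=\max(pm,\,pmn-pm+p)-1$, $\mathcal{E}=\{p+p(m'-1)+pm(n''-1): m'\in[m],n''\in[n]\}$, and $\Delta_s^{l}=\prod_{k\in[K_c]}(f_{l,k}-\alpha_s)^{R'}$. Let $c_{l,k,i}$ be the coefficients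 of $\Psi_{l,k}(\alpha)=\prod_{k'\in[K_c]\setminus\{k\}}(\alpha+f_{l,k'}-f_{l,k})^{R'}=\sum_{i=0}^{R'(K_c-1)}c_{l,k,i}\alpha^i$, with $c_{l,k,i}=0$ for $i>R'(K_c-1)$. $P_s^{l,k}=\sum_{m'\in[m]}\sum_{p'\in[p]}\mathbf{A}^{l,k}_{m',p'}(f_{l,k}-\alpha_s)^{p'-1+p(m'-1)}$, $Q_s^{l,k}=\sum_{p''\in[p]}\sum_{n''\in[n]}\mathbf{B}^{l,k}_{p'',n''}(f_{l,k}-\alpha_s)^{p-p''+pm(n''-1)}$. Noise matrices $\mathbf{Z}^A_{l,x}\in\mathbb{F}^{\frac{\lambda}{m}\times\frac{\kappa}{p}}$, $\mathbf{Z}^B_{l,x}\in\mathbb{F}^{\frac{\kappa}{p}\times\frac{\mu}{n}}$ ($l\in[\ell],x\in[X]$); $\mathbf{Z}'_i\in\mathbb{F}^{\frac{\lambda}{m}\times\frac{\mu}{n}}$ ($i\in[R'(K_c-1)+X+D_E]$); $\mathbf{Z}''_{l,k,i}\in\mathbb{F}^{\frac{\lambda}{m}\times\frac{\mu}{n}}$ ($i\in[R']$) with $\mathbf{Z}''_{l,k,i}=\mathbf{0}$ for $i\in\mathcal{E}$ (arbitrary otherwise). $\widetilde{A}^s_l=\Delta_s^{l}\big(\sum_{k\in[K_c]}\frac{P_s^{l,k}}{(f_{l,k}-\alpha_s)^{R'}}+\sum_{x\in[X]}\alpha_s^{x-1}\mathbf{Z}^A_{l,x}\big)$, $\widetilde{B}^s_l=\sum_{k\in[K_c]}\frac{Q_s^{l,k}}{(f_{l,k}-\alpha_s)^{R'}}+\sum_{x\in[X]}\alpha_s^{x-1}\mathbf{Z}^B_{l,x}$,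 $\widetilde{M}_s=\sum_{x\in[R'(K_c-1)+X+D_E]}\alpha_s^{x-1}\mathbf{Z}'_x+\sum_{l\in[\ell]}\sum_{k\in[K_c]}\sum_{i=0}^{R'-1}\frac{\sum_{i'=0}^{i}c_{l,k,i-i'}\mathbf{Z}''_{l,k,i'+1}}{(f_{l,k}-\alpha_s)^{R'-i}}$, and $Y_s=\sum_{l\in[\ell]}\widetilde{A}^s_l\widetilde{B}^s_l+\widetilde{M}_s$. *)

theory Defs
  imports "HOL-Computational_Algebra.Polynomial"
begin

text \<open>Matrices are represented entrywise as functions nat => nat => 'a with 0-based
  row/column indices; only entries inside the stated dimensions are meaningful.
  All block / matrix indices of the paper ([m] = {1..m}) are 1-based as in the paper.\<close>

type_synonym 'a fmat = "nat \<Rightarrow> nat \<Rightarrow> 'a"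

definition blk :: "nat \<Rightarrow> nat \<Rightarrow> 'a fmat \<Rightarrow> nat \<Rightarrow> nat \<Rightarrow> 'a fmat" where
  "blk rs cs M i j = (\<lambda>r c. M ((i - 1) * rs + r) ((j - 1) * cs + c))"

definition mmul :: "nat \<Rightarrow> 'a::comm_semiring_1 fmat \<Rightarrow> 'a fmat \<Rightarrow> 'a fmat" where
  "mmul d M N = (\<lambda>r c. \<Sum>t<d. M r t * N t c)"

definition Rp :: "nat \<Rightarrow> nat \<Rightarrow> nat \<Rightarrow> nat" where
  "Rp p m n = p * m * n"

definition DE :: "nat \<Rightarrow> nat \<Rightarrow> nat \<Rightarrow> nat" where
  "DE p m n = max (p * m) (p * m * n - p * m + p) - 1"

definition Eset :: "nat \<Rightarrow> nat \<Rightarrow> nat \<Rightarrow> nat set" where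
  "Eset p m n = {p + p * (m' - 1) + p * m * (n'' - 1) | m' n''. m' \<in> {1..m} \<and> n'' \<in> {1..n}}"

definition Delta :: "nat \<Rightarrow> nat \<Rightarrow> (nat \<Rightarrow> nat \<Rightarrow> 'a::field) \<Rightarrow> nat \<Rightarrow> 'a \<Rightarrow> 'a" where
  "Delta Kc R f l a = (\<Prod>k\<in>{1..Kc}. (f l k - a) ^ R)"

definition Psi :: "nat \<Rightarrow> nat \<Rightarrow> (nat \<Rightarrow> nat \<Rightarrow> 'a::field) \<Rightarrow> nat \<Rightarrow> nat \<Rightarrow> 'a poly" where
  "Psi Kc R f l k = (\<Prod>k'\<in>{1..Kc} - {k}. [:f l k' - f l k, 1:] ^ R)"

definition cc :: "nat \<Rightarrow> nat \<Rightarrow> (nat \<Rightarrow> nat \<Rightarrow> 'a::field) \<Rightarrow> nat \<Rightarrow> nat \<Rightarrow> nat \<Rightarrow> 'a" where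
  "cc Kc R f l k i = coeff (Psi Kc R f l k) i"

definition Pmat :: "nat \<Rightarrow> nat \<Rightarrow> nat \<Rightarrow> nat \<Rightarrow> (nat \<Rightarrow> nat \<Rightarrow> 'a::field) \<Rightarrow> (nat \<Rightarrow> 'a)
    \<Rightarrow> (nat \<Rightarrow> nat \<Rightarrow> 'a fmat) \<Rightarrow> nat \<Rightarrow> nat \<Rightarrow> nat \<Rightarrow> 'a fmat" where
  "Pmat p m lam kap f \<alpha> A l k s = (\<lambda>r c. \<Sum>m'\<in>{1..m}. \<Sum>p'\<in>{1..p}.
      blk (lam div m) (kap div p) (A l k) m' p' r c * (f l k - \<alpha> s) ^ (p' - 1 + p * (m' - 1)))"

definition Qmat :: "nat \<Rightarrow> nat \<Rightarrow> nat \<Rightarrow> nat \<Rightarrow> nat \<Rightarrow> (nat \<Rightarrow> nat \<Rightarrow> 'a::field) \<Rightarrow> (nat \<Rightarrow> 'a)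
    \<Rightarrow> (nat \<Rightarrow> nat \<Rightarrow> 'a fmat) \<Rightarrow> nat \<Rightarrow> nat \<Rightarrow> nat \<Rightarrow> 'a fmat" where
  "Qmat p m n kap mu f \<alpha> B l k s = (\<lambda>r c. \<Sum>p''\<in>{1..p}. \<Sum>n''\<in>{1..n}.
      blk (kap div p) (mu div n) (B l k) p'' n'' r c * (f l k - \<alpha> s) ^ (p - p'' + p * m * (n'' - 1)))"

definition Atil :: "nat \<Rightarrow> nat \<Rightarrow> nat \<Rightarrow> nat \<Rightarrow> nat \<Rightarrow> nat \<Rightarrow> nat \<Rightarrow> (nat \<Rightarrow> nat \<Rightarrow> 'a::field)
    \<Rightarrow> (nat \<Rightarrow> 'a) \<Rightarrow> (nat \<Rightarrow> nat \<Rightarrow> 'a fmat) \<Rightarrow> (nat \<Rightarrow> nat \<Rightarrow> 'a fmat) \<Rightarrow> nat \<Rightarrow> nat \<Rightarrow> 'a fmat" where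
  "Atil p m n lam kap X Kc f \<alpha> A ZA l s = (\<lambda>r c. Delta Kc (Rp p m n) f l (\<alpha> s) *
      ((\<Sum>k\<in>{1..Kc}. Pmat p m lam kap f \<alpha> A l k s r c / (f l k - \<alpha> s) ^ Rp p m n)
       + (\<Sum>x\<in>{1..X}. \<alpha> s ^ (x - 1) * ZA l x r c)))"

definition Btil :: "nat \<Rightarrow> nat \<Rightarrow> nat \<Rightarrow> nat \<Rightarrow> nat \<Rightarrow> nat \<Rightarrow> nat \<Rightarrow> (nat \<Rightarrow> nat \<Rightarrow> 'a::field)
    \<Rightarrow> (nat \<Rightarrow> 'a) \<Rightarrow> (nat \<Rightarrow> nat \<Rightarrow> 'a fmat) \<Rightarrow> (nat \<Rightarrow> nat \<Rightarrow> 'a fmat) \<Rightarrow> nat \<Rightarrow> nat \<Rightarrow> 'a fmat" where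
  "Btil p m n kap mu X Kc f \<alpha> B ZB l s = (\<lambda>r c.
      (\<Sum>k\<in>{1..Kc}. Qmat p m n kap mu f \<alpha> B l k s r c / (f l k - \<alpha> s) ^ Rp p m n)
       + (\<Sum>x\<in>{1..X}. \<alpha> s ^ (x - 1) * ZB l x r c))"

definition Mtil :: "nat \<Rightarrow> nat \<Rightarrow> nat \<Rightarrow> nat \<Rightarrow> nat \<Rightarrow> nat \<Rightarrow> (nat \<Rightarrow> nat \<Rightarrow> 'a::field)
    \<Rightarrow> (nat \<Rightarrow> 'a) \<Rightarrow> (nat \<Rightarrow> 'a fmat) \<Rightarrow> (nat \<Rightarrow> nat \<Rightarrow> nat \<Rightarrow> 'a fmat) \<Rightarrow> nat \<Rightarrow> 'a fmat" where
  "Mtil p m n X ell Kc f \<alpha> Z' Z'' s = (\<lambda>r c.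
      (\<Sum>x\<in>{1..Rp p m n * (Kc - 1) + X + DE p m n}. \<alpha> s ^ (x - 1) * Z' x r c)
      + (\<Sum>l\<in>{1..ell}. \<Sum>k\<in>{1..Kc}. \<Sum>i<Rp p m n.
           (\<Sum>i'\<le>i. cc Kc (Rp p m n) f l k (i - i') * Z'' l k (i' + 1) r c)
             / (f l k - \<alpha> s) ^ (Rp p m n - i)))"

definition Ymat :: "nat \<Rightarrow> nat \<Rightarrow> nat \<Rightarrow> nat \<Rightarrow> nat \<Rightarrow> nat \<Rightarrow> nat \<Rightarrow> nat \<Rightarrow> nat
    \<Rightarrow> (nat \<Rightarrow> nat \<Rightarrow> 'a::field) \<Rightarrow> (nat \<Rightarrow> 'a)
    \<Rightarrow> (nat \<Rightarrow> nat \<Rightarrow> 'a fmat) \<Rightarrow> (nat \<Rightarrow> nat \<Rightarrow> 'a fmat)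
    \<Rightarrow> (nat \<Rightarrow> nat \<Rightarrow> 'a fmat) \<Rightarrow> (nat \<Rightarrow> nat \<Rightarrow> 'a fmat)
    \<Rightarrow> (nat \<Rightarrow> 'a fmat) \<Rightarrow> (nat \<Rightarrow> nat \<Rightarrow> nat \<Rightarrow> 'a fmat) \<Rightarrow> nat \<Rightarrow> 'a fmat" where
  "Ymat p m n lam kap mu X ell Kc f \<alpha> A B ZA ZB Z' Z'' s = (\<lambda>r c.
      (\<Sum>l\<in>{1..ell}. mmul (kap div p) (Atil p m n lam kap X Kc f \<alpha> A ZA l s)
                                      (Btil p m n kap mu X Kc f \<alpha> B ZB l s) r c)
      + Mtil p m n X ell Kc f \<alpha> Z' Z'' s r c)"

definition Cmat :: "nat \<Rightarrow> nat \<Rightarrow> nat \<Rightarrow> nat \<Rightarrow> nat \<Rightarrow> nat \<Rightarrow> (nat \<Rightarrow> nat \<Rightarrow> 'a::comm_semiring_1 fmat)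
    \<Rightarrow> (nat \<Rightarrow> nat \<Rightarrow> 'a fmat) \<Rightarrow> nat \<Rightarrow> nat \<Rightarrow> nat \<Rightarrow> 'a fmat" where
  "Cmat p m n lam kap mu A B l k j = (\<lambda>r c.
     \<Sum>(a, b, e, d) \<in> {(a, b, e, d). a \<in> {1..m} \<and> b \<in> {1..p} \<and> e \<in> {1..p} \<and> d \<in> {1..n}
                          \<and> b - 1 + p * (a - 1) + p - e + p * m * (d - 1) + 1 = j}.
        mmul (kap div p) (blk (lam div m) (kap div p) (A l k) a b)
                         (blk (kap div p) (mu div n) (B l k) e d) r c)"

end

theory Submission
  imports Defs
begin

(*
  Fix l and s and write x_k = f_{l,k} - alpha_s.  Clearing the common denominator
  Delta = prod_k x_k^R', the product of A~_l and B~_l splits into diagonal terms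
  Psi_{l,k}(x_k) P_k Q_k / x_k^R' (since prod_{j <> k} x_j^R' = Psi_{l,k}(x_k)), cross terms that are
  polynomials in alpha_s, and the noise product Delta (sum_x alpha_s^(x-1) Z^A) (sum_x alpha_s^(x-1) Z^B).
  As P_k Q_k = sum_i C_{i+1} x_k^i, dividing Psi_{l,k} P_k Q_k by x_k^R' leaves the principal part
  sum_{i<R'} (sum_{i'} c_{l,k,i-i'} C_{i'+1}) / x_k^(R'-i) plus a polynomial in alpha_s.  Every
  polynomial part except the noise product has degree below R'(K_c-1)+X+D_E, so the coefficients
  I_x of the total polynomial part depend only on the noise beyond that degree.  For (a), the
  exponent p+p(m'-1)+pm(n''-1)-1 is reached only by the index tuples with p' = p''.
*)

definition poly_deg_on :: "'i set \<Rightarrow> ('i \<Rightarrow> 'a::comm_ring_1) \<Rightarrow> nat \<Rightarrow> ('i \<Rightarrow> 'a) \<Rightarrow> bool" where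
  "poly_deg_on U \<alpha> D h \<longleftrightarrow> (\<exists>q. degree q \<le> D \<and> (\<forall>s\<in>U. h s = poly q (\<alpha> s)))"

lemma poly_deg_on_mono: "poly_deg_on U \<alpha> D h \<Longrightarrow> D \<le> D' \<Longrightarrow> poly_deg_on U \<alpha> D' h"
  unfolding poly_deg_on_def by (meson order_trans)

lemma poly_deg_on_cong:
  "poly_deg_on U \<alpha> D h \<Longrightarrow> (\<And>s. s \<in> U \<Longrightarrow> h s = g s) \<Longrightarrow> poly_deg_on U \<alpha> D g"
  unfolding poly_deg_on_def by auto

lemma poly_deg_on_const: "poly_deg_on U \<alpha> D (\<lambda>s. c)"
  unfolding poly_deg_on_def by (intro exI[of _ "[:c:]"]) auto

lemma poly_deg_on_add:
  assumes "poly_deg_on U \<alpha> D h" "poly_deg_on U \<alpha> D g"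
  shows "poly_deg_on U \<alpha> D (\<lambda>s. h s + g s)"
proof -
  obtain q1 q2 where "degree q1 \<le> D" "\<forall>s\<in>U. h s = poly q1 (\<alpha> s)"
    "degree q2 \<le> D" "\<forall>s\<in>U. g s = poly q2 (\<alpha> s)"
    using assms unfolding poly_deg_on_def by blast
  then show ?thesis
    unfolding poly_deg_on_def
    by (intro exI[of _ "q1 + q2"]) (auto intro: order_trans[OF degree_add_le_max])
qed

lemma poly_deg_on_mult:
  assumes "poly_deg_on U \<alpha> D1 h" "poly_deg_on U \<alpha> D2 g"
  shows "poly_deg_on U \<alpha> (D1 + D2) (\<lambda>s. h s * g s)"
proof -
  obtain q1 q2 where "degree q1 \<le> D1" "\<forall>s\<in>U. h s = poly q1 (\<alpha> s)"
    "degree q2 \<le> D2" "\<forall>s\<in>U. g s = poly q2 (\<alpha> s)"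
    using assms unfolding poly_deg_on_def by blast
  then show ?thesis
    unfolding poly_deg_on_def
    by (intro exI[of _ "q1 * q2"]) (auto intro: order_trans[OF degree_mult_le])
qed

lemma poly_deg_on_scale: "poly_deg_on U \<alpha> D h \<Longrightarrow> poly_deg_on U \<alpha> D (\<lambda>s. c * h s)"
  using poly_deg_on_mult[OF poly_deg_on_const[of U \<alpha> 0 c]] by simp

lemma poly_deg_on_sum:
  "finite A \<Longrightarrow> (\<And>a. a \<in> A \<Longrightarrow> poly_deg_on U \<alpha> D (h a))
    \<Longrightarrow> poly_deg_on U \<alpha> D (\<lambda>s. \<Sum>a\<in>A. h a s)"
proof (induction A rule: finite_induct)
  case empty
  then show ?case by (simp add: poly_deg_on_const)
next
  case (insert x F)
  then show ?case by (simp add: poly_deg_on_add)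
qed

lemma poly_deg_on_prod:
  "finite A \<Longrightarrow> (\<And>a. a \<in> A \<Longrightarrow> poly_deg_on U \<alpha> D (h a))
    \<Longrightarrow> poly_deg_on U \<alpha> (D * card A) (\<lambda>s. \<Prod>a\<in>A. h a s)"
proof (induction A rule: finite_induct)
  case empty
  then show ?case by (simp add: poly_deg_on_const)
next
  case (insert x F)
  then show ?case
    using poly_deg_on_mult[of U \<alpha> D "h x" "D * card F"] by (simp add: add.commute)
qed

lemma poly_deg_on_poly_shifted: "poly_deg_on U \<alpha> (degree W) (\<lambda>s. poly W (c - \<alpha> s))"
  unfolding poly_deg_on_def
proof (intro exI[of _ "pcompose W [:c, -1:]"] conjI ballI)
  show "degree (pcompose W [:c, -1:]) \<le> degree W"
    using degree_pcompose_le[of W "[:c, -1:]"] by (simp split: if_splits)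
qed (simp add: poly_pcompose)

lemma poly_deg_on_shifted_power: "poly_deg_on U \<alpha> e (\<lambda>s. (c - \<alpha> s) ^ e)"
  using poly_deg_on_poly_shifted[of U \<alpha> "monom 1 e" c]
  by (simp add: poly_monom degree_monom_eq)

lemma poly_deg_on_power: "poly_deg_on U \<alpha> e (\<lambda>s. \<alpha> s ^ e)"
  unfolding poly_deg_on_def
  by (intro exI[of _ "monom 1 e"]) (auto simp: poly_monom degree_monom_le)

lemma poly_deg_on_power_sum:
  "poly_deg_on U \<alpha> (N - 1) (\<lambda>s. \<Sum>x\<in>{1..N}. \<alpha> s ^ (x - 1) * Z x)"
proof (intro poly_deg_on_sum finite_atLeastAtMost)
  fix x assume "x \<in> {1..N}"
  then show "poly_deg_on U \<alpha> (N - 1) (\<lambda>s. \<alpha> s ^ (x - 1) * Z x)"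
    using poly_deg_on_mult[OF poly_deg_on_power[of U \<alpha> "x - 1"] poly_deg_on_const[of U \<alpha> 0 "Z x"]]
    by (auto intro: poly_deg_on_mono)
qed

lemma sum_group_by_exponent:
  fixes x :: "'a::comm_semiring_1"
  assumes "finite Q" and "E ` Q \<subseteq> {..N}"
  shows "(\<Sum>q\<in>Q. g q * x ^ E q) = (\<Sum>i\<le>N. (\<Sum>q | q \<in> Q \<and> E q = i. g q) * x ^ i)"
proof -
  have "(\<Sum>q\<in>Q. g q * x ^ E q) = (\<Sum>i\<le>N. \<Sum>q | q \<in> Q \<and> E q = i. g q * x ^ E q)"
    using sum.group[OF assms(1) finite_atMost assms(2), of "\<lambda>q. g q * x ^ E q"] by simp
  also have "\<dots> = (\<Sum>i\<le>N. (\<Sum>q | q \<in> Q \<and> E q = i. g q) * x ^ i)"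
    by (rule sum.cong) (auto simp: sum_distrib_right)
  finally show ?thesis .
qed

lemma block_exponent_le:
  assumes "a \<in> {1..m}" "b \<in> {1..p}" "e \<in> {1..p}" "d \<in> {1..n}"
  shows "b - 1 + p * (a - 1) + p - e + p * m * (d - 1) \<le> Rp p m n + p - 2"
proof -
  have "p * (a - 1) \<le> p * (m - 1)" "p * m * (d - 1) \<le> p * m * (n - 1)"
    using assms by (auto intro!: mult_le_mono2 diff_le_mono)
  moreover have "p * (m - 1) = p * m - p" "p * m * (n - 1) = p * m * n - p * m"
    by (simp_all add: algebra_simps)
  moreover have "p \<le> p * m" "p * m \<le> p * m * n" using assms by simp_all
  ultimately show ?thesis using assms(2,3) unfolding atLeastAtMost_iff Rp_def by linarith
qed

lemma Pmat_mmul_Qmat: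
  fixes f :: "nat \<Rightarrow> nat \<Rightarrow> 'a::field"
  assumes "0 < p" "0 < m" "0 < n"
  shows "mmul (kap div p) (Pmat p m lam kap f \<alpha> A l k s) (Qmat p m n kap mu f \<alpha> B l k s) r c
        = (\<Sum>i\<le>Rp p m n + p - 2. Cmat p m n lam kap mu A B l k (i + 1) r c * (f l k - \<alpha> s) ^ i)"
proof -
  define x where "x = f l k - \<alpha> s"
  define bA where "bA = blk (lam div m) (kap div p) (A l k)"
  define bB where "bB = blk (kap div p) (mu div n) (B l k)"
  define Q where "Q = {1..m} \<times> {1..p} \<times> {1..p} \<times> {1..n}"
  define E where "E = (\<lambda>(a::nat, b::nat, e::nat, d::nat). b - 1 + p * (a - 1) + p - e + p * m * (d - 1))"
  define g where "g = (\<lambda>(a, b, e, d). mmul (kap div p) (bA a b) (bB e d) r c)"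
  have PQ: "Pmat p m lam kap f \<alpha> A l k s r t * Qmat p m n kap mu f \<alpha> B l k s t c
      = (\<Sum>(a, b, e, d)\<in>Q. bA a b r t * bB e d t c * x ^ E (a, b, e, d))" for t
  proof -
    have "Pmat p m lam kap f \<alpha> A l k s r t * Qmat p m n kap mu f \<alpha> B l k s t c
      = (\<Sum>a\<in>{1..m}. \<Sum>b\<in>{1..p}. \<Sum>e\<in>{1..p}. \<Sum>d\<in>{1..n}.
           (bA a b r t * x ^ (b - 1 + p * (a - 1))) * (bB e d t c * x ^ (p - e + p * m * (d - 1))))"
      unfolding Pmat_def Qmat_def bA_def bB_def x_def
      by (simp only: sum_distrib_right) (simp only: sum_distrib_left)
    also have "\<dots> = (\<Sum>a\<in>{1..m}. \<Sum>b\<in>{1..p}. \<Sum>e\<in>{1..p}. \<Sum>d\<in>{1..n}.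
           bA a b r t * bB e d t c * x ^ E (a, b, e, d))"
    proof (intro sum.cong refl)
      fix a b e d assume "e \<in> {1..p}"
      then have "E (a, b, e, d) = (b - 1 + p * (a - 1)) + (p - e + p * m * (d - 1))"
        unfolding E_def by auto
      then show "(bA a b r t * x ^ (b - 1 + p * (a - 1))) * (bB e d t c * x ^ (p - e + p * m * (d - 1)))
          = bA a b r t * bB e d t c * x ^ E (a, b, e, d)"
        by (simp add: power_add mult_ac)
    qed
    finally show ?thesis unfolding Q_def by (simp add: sum.cartesian_product)
  qed
  have "mmul (kap div p) (Pmat p m lam kap f \<alpha> A l k s) (Qmat p m n kap mu f \<alpha> B l k s) r c
      = (\<Sum>q\<in>Q. g q * x ^ E q)"
    unfolding mmul_def PQ by (subst sum.swap) (auto simp: g_def mmul_def sum_distrib_right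
        intro!: sum.cong split: prod.splits)
  also have "\<dots> = (\<Sum>i\<le>Rp p m n + p - 2. (\<Sum>q | q \<in> Q \<and> E q = i. g q) * x ^ i)"
  proof (rule sum_group_by_exponent)
    show "finite Q" unfolding Q_def by simp
    have "E q \<le> Rp p m n + p - 2" if "q \<in> Q" for q
      using that block_exponent_le[of _ m _ p _ _ n] unfolding Q_def E_def by auto
    then show "E ` Q \<subseteq> {..Rp p m n + p - 2}" by auto
  qed
  also have "\<dots> = (\<Sum>i\<le>Rp p m n + p - 2. Cmat p m n lam kap mu A B l k (i + 1) r c * x ^ i)"
  proof (rule sum.cong[OF refl])
    fix i
    have "{q. q \<in> Q \<and> E q = i} = {(a, b, e, d). a \<in> {1..m} \<and> b \<in> {1..p} \<and> e \<in> {1..p}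
        \<and> d \<in> {1..n} \<and> b - 1 + p * (a - 1) + p - e + p * m * (d - 1) + 1 = i + 1}"
      unfolding Q_def E_def by auto
    then show "(\<Sum>q | q \<in> Q \<and> E q = i. g q) * x ^ i = Cmat p m n lam kap mu A B l k (i + 1) r c * x ^ i"
      unfolding Cmat_def g_def bA_def bB_def by simp
  qed
  finally show ?thesis unfolding x_def .
qed

lemma mixed_radix_eq:
  fixes a a' d d' m :: nat
  assumes "a < m" "a' < m" "a + m * d = a' + m * d'"
  shows "a = a' \<and> d = d'"
  using assms
  by (metis add.commute div_mult_self2 mod_mult_self2 mod_less div_less add_0 not_less0 less_nat_zero_code)

lemma diagonal_exponent_unique:
  fixes p m :: nat
  assumes "b \<in> {1..p}" "e \<in> {1..p}" "a \<in> {1..m}" "a' \<in> {1..m}" "1 \<le> d" "1 \<le> d'"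
    and eq: "b - 1 + p * (a - 1) + p - e + p * m * (d - 1) + 1 = p + p * (a' - 1) + p * m * (d' - 1)"
  shows "b = e \<and> a = a' \<and> d = d'"
proof -
  define K where "K = a - 1 + m * (d - 1)"
  define K' where "K' = a' - 1 + m * (d' - 1)"
  have "p * K = p * (a - 1) + p * m * (d - 1)" "p * K' = p * (a' - 1) + p * m * (d' - 1)"
    unfolding K_def K'_def by (simp_all add: algebra_simps)
  then have "b + p * K = e + p * K'"
    using eq assms unfolding atLeastAtMost_iff by linarith
  then have "int b - int e = int p * (int K' - int K)"
    by (simp add: algebra_simps flip: of_nat_add of_nat_mult)
  moreover have "\<bar>int b - int e\<bar> < int p" using assms by auto
  ultimately have "b = e"
    using dvd_imp_le_int[of "int b - int e" "int p"]
    by (metis dvd_triv_left abs_of_nat eq_iff_diff_eq_0 not_less of_nat_eq_iff)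
  with \<open>b + p * K = e + p * K'\<close> have "p * K = p * K'" by simp
  then have "a - 1 + m * (d - 1) = a' - 1 + m * (d' - 1)"
    using assms unfolding K_def K'_def by simp
  moreover have "a - 1 < m" "a' - 1 < m" using assms by auto
  ultimately have "a - 1 = a' - 1 \<and> d - 1 = d' - 1"
    by (intro mixed_radix_eq)
  then show ?thesis using \<open>b = e\<close> assms by auto
qed

lemma Cmat_diagonal:
  assumes "0 < p" "m' \<in> {1..m}" "n'' \<in> {1..n}"
  shows "Cmat p m n lam kap mu A B l k (p + p * (m' - 1) + p * m * (n'' - 1)) r c
     = (\<Sum>p'\<in>{1..p}. mmul (kap div p) (blk (lam div m) (kap div p) (A l k) m' p')
                                      (blk (kap div p) (mu div n) (B l k) p' n'') r c)"
proof -
  have "{(a, b, e, d). a \<in> {1..m} \<and> b \<in> {1..p} \<and> e \<in> {1..p} \<and> d \<in> {1..n}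
          \<and> b - 1 + p * (a - 1) + p - e + p * m * (d - 1) + 1 = p + p * (m' - 1) + p * m * (n'' - 1)}
      = (\<lambda>p'. (m', p', p', n'')) ` {1..p}"
  proof (intro equalityI subsetI)
    fix q assume "q \<in> {(a, b, e, d). a \<in> {1..m} \<and> b \<in> {1..p} \<and> e \<in> {1..p} \<and> d \<in> {1..n}
          \<and> b - 1 + p * (a - 1) + p - e + p * m * (d - 1) + 1 = p + p * (m' - 1) + p * m * (n'' - 1)}"
    then obtain a b e d where "q = (a, b, e, d)" "a \<in> {1..m}" "b \<in> {1..p}" "e \<in> {1..p}" "d \<in> {1..n}"
        "b - 1 + p * (a - 1) + p - e + p * m * (d - 1) + 1 = p + p * (m' - 1) + p * m * (n'' - 1)"
      by blast
    with diagonal_exponent_unique[of b p e a m m' d n''] assms show "q \<in> (\<lambda>p'. (m', p', p', n'')) ` {1..p}"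
      by auto
  qed (use assms in auto)
  then show ?thesis unfolding Cmat_def by (simp add: sum.reindex inj_on_def)
qed

lemma blk_mmul:
  assumes "p dvd kap"
  shows "(\<Sum>p'\<in>{1..p}. mmul (kap div p) (blk rs (kap div p) M i p') (blk (kap div p) cs N p' j) r c)
     = blk rs cs (mmul kap M N) i j r c"
proof -
  define d where "d = kap div p"
  define F where "F t = M ((i - 1) * rs + r) t * N t ((j - 1) * cs + c)" for t
  have "blk rs cs (mmul kap M N) i j r c = (\<Sum>t<p * d. F t)"
    using assms unfolding blk_def mmul_def F_def d_def by simp
  also have "\<dots> = (\<Sum>q<p. \<Sum>t\<in>{q * d..<q * d + d}. F t)"
    by (rule sum.nat_group[symmetric])
  also have "\<dots> = (\<Sum>q<p. \<Sum>t<d. F (q * d + t))"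
    using sum.atLeastLessThan_shift_bounds[of F 0 "_ * d" d]
    by (simp add: atLeast0LessThan comp_def add.commute)
  also have "\<dots> = (\<Sum>p'\<in>{1..p}. mmul d (blk rs d M i p') (blk d cs N p' j) r c)"
    unfolding One_nat_def sum.atLeast1_atMost_eq by (simp add: blk_def mmul_def F_def)
  finally show ?thesis unfolding d_def ..
qed

lemma prod_times_sum_divide:
  fixes y :: "'k \<Rightarrow> 'a::field"
  assumes "finite K" and "\<And>k. k \<in> K \<Longrightarrow> y k \<noteq> 0"
  shows "(\<Prod>j\<in>K. y j) * (\<Sum>k\<in>K. P k / y k) = (\<Sum>k\<in>K. (\<Prod>j\<in>K - {k}. y j) * P k)"
  unfolding sum_distrib_left
proof (rule sum.cong[OF refl])
  fix k assume "k \<in> K"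
  then show "(\<Prod>j\<in>K. y j) * (P k / y k) = (\<Prod>j\<in>K - {k}. y j) * P k"
    using prod.remove[OF assms(1), of k y] assms(2)[of k] by simp
qed

lemma prod_times_sum_divide_product:
  fixes y :: "'k \<Rightarrow> 'a::field"
  assumes K: "finite K" and y: "\<And>k. k \<in> K \<Longrightarrow> y k \<noteq> 0"
  shows "(\<Prod>j\<in>K. y j) * (\<Sum>k\<in>K. P k / y k) * (\<Sum>k\<in>K. Q k / y k)
    = (\<Sum>k\<in>K. (\<Prod>j\<in>K - {k}. y j) * (P k * Q k) / y k)
      + (\<Sum>k\<in>K. \<Sum>k'\<in>K - {k}. (\<Prod>j\<in>K - {k} - {k'}. y j) * (P k * Q k'))"
proof -
  have "(\<Prod>j\<in>K. y j) * (\<Sum>k\<in>K. P k / y k) * (\<Sum>k\<in>K. Q k / y k)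
      = (\<Sum>k\<in>K. (\<Prod>j\<in>K - {k}. y j) * P k) * (\<Sum>k\<in>K. Q k / y k)"
    using prod_times_sum_divide[OF assms, where P = P] by simp
  also have "\<dots> = (\<Sum>k\<in>K. P k * ((\<Prod>j\<in>K - {k}. y j) * (Q k / y k + (\<Sum>k'\<in>K - {k}. Q k' / y k'))))"
    unfolding sum_distrib_right by (intro sum.cong refl) (simp add: sum.remove[OF K] mult_ac)
  also have "\<dots> = (\<Sum>k\<in>K. (\<Prod>j\<in>K - {k}. y j) * (P k * Q k) / y k
      + (\<Sum>k'\<in>K - {k}. (\<Prod>j\<in>K - {k} - {k'}. y j) * (P k * Q k')))"
  proof (rule sum.cong[OF refl])
    fix k assume "k \<in> K"
    have "(\<Prod>j\<in>K - {k}. y j) * (\<Sum>k'\<in>K - {k}. Q k' / y k')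
        = (\<Sum>k'\<in>K - {k}. (\<Prod>j\<in>K - {k} - {k'}. y j) * Q k')"
      using K y by (intro prod_times_sum_divide) auto
    then show "P k * ((\<Prod>j\<in>K - {k}. y j) * (Q k / y k + (\<Sum>k'\<in>K - {k}. Q k' / y k')))
        = (\<Prod>j\<in>K - {k}. y j) * (P k * Q k) / y k
          + (\<Sum>k'\<in>K - {k}. (\<Prod>j\<in>K - {k} - {k'}. y j) * (P k * Q k'))"
      by (simp add: distrib_left sum_distrib_left mult_ac)
  qed
  finally show ?thesis by (simp add: sum.distrib)
qed

lemma poly_divide_power_split:
  fixes y :: "'a::field"
  assumes "y \<noteq> 0"
  shows "poly U y / y ^ R = (\<Sum>i<R. coeff U i / y ^ (R - i)) + poly (poly_shift R U) y"
proof -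
  have U: "U = (\<Sum>i<R. monom (coeff U i) i) + monom 1 R * poly_shift R U"
    by (rule poly_eqI) (auto simp: coeff_sum coeff_monom coeff_monom_mult coeff_poly_shift)
  have "poly U y / y ^ R = (\<Sum>i<R. coeff U i * y ^ i / y ^ R) + poly (poly_shift R U) y"
    using assms by (subst U) (simp add: poly_sum poly_monom add_divide_distrib sum_divide_distrib)
  also have "(\<Sum>i<R. coeff U i * y ^ i / y ^ R) = (\<Sum>i<R. coeff U i / y ^ (R - i))"
  proof (rule sum.cong[OF refl])
    fix i assume "i \<in> {..<R}"
    then have "y ^ R = y ^ i * y ^ (R - i)" by (simp flip: power_add)
    then show "coeff U i * y ^ i / y ^ R = coeff U i / y ^ (R - i)" using assms by simp
  qed
  finally show ?thesis .
qed

lemma degree_poly_shift: "degree (poly_shift R U) \<le> degree U - R"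
  by (rule degree_le) (auto simp: coeff_poly_shift coeff_eq_0)

lemma poly_Psi: "poly (Psi Kc R f l k) (f l k - a) = (\<Prod>j\<in>{1..Kc} - {k}. (f l j - a) ^ R)"
  unfolding Psi_def by (simp add: poly_prod poly_power)

lemma degree_Psi:
  assumes "k \<in> {1..Kc}"
  shows "degree (Psi Kc R f l k) \<le> R * (Kc - 1)"
proof -
  have "degree (Psi Kc R f l k) \<le> (\<Sum>j\<in>{1..Kc} - {k}. degree ([:f l j - f l k, 1:] ^ R))"
    unfolding Psi_def using degree_prod_sum_le[of "{1..Kc} - {k}"] by (simp add: o_def)
  also have "\<dots> \<le> (\<Sum>j\<in>{1..Kc} - {k}. R)" by (rule sum_mono) (simp add: degree_power_eq)
  also have "\<dots> = R * (Kc - 1)" using assms by (simp add: card_Diff_singleton)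
  finally show ?thesis .
qed

definition cross_terms :: "nat \<Rightarrow> 'k set \<Rightarrow> ('k \<Rightarrow> 'a::comm_ring_1) \<Rightarrow> ('k \<Rightarrow> 'a) \<Rightarrow> ('k \<Rightarrow> 'a)
    \<Rightarrow> 'a \<Rightarrow> 'a \<Rightarrow> 'a" where
  "cross_terms R K y P Q a b =
     (\<Sum>k\<in>K. \<Sum>k'\<in>K - {k}. (\<Prod>j\<in>K - {k} - {k'}. y j ^ R) * (P k * Q k'))
     + (\<Sum>k\<in>K. (\<Prod>j\<in>K - {k}. y j ^ R) * P k * b)
     + (\<Sum>k\<in>K. (\<Prod>j\<in>K - {k}. y j ^ R) * Q k * a)"

lemma prod_times_sums_expand:
  fixes y :: "'k \<Rightarrow> 'a::field"
  assumes K: "finite K" and y: "\<And>k. k \<in> K \<Longrightarrow> y k \<noteq> 0"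
  shows "(\<Prod>j\<in>K. y j ^ R) * ((\<Sum>k\<in>K. P k / y k ^ R) + a) * ((\<Sum>k\<in>K. Q k / y k ^ R) + b)
    = (\<Sum>k\<in>K. (\<Prod>j\<in>K - {k}. y j ^ R) * (P k * Q k) / y k ^ R)
      + cross_terms R K y P Q a b + (\<Prod>j\<in>K. y j ^ R) * a * b"
proof -
  let ?D = "\<Prod>j\<in>K. y j ^ R" and ?SP = "\<Sum>k\<in>K. P k / y k ^ R" and ?SQ = "\<Sum>k\<in>K. Q k / y k ^ R"
  have y': "\<And>k. k \<in> K \<Longrightarrow> y k ^ R \<noteq> 0" using y by simp
  have P: "?D * ?SP = (\<Sum>k\<in>K. (\<Prod>j\<in>K - {k}. y j ^ R) * P k)"
    and Q: "?D * ?SQ = (\<Sum>k\<in>K. (\<Prod>j\<in>K - {k}. y j ^ R) * Q k)"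
    by (rule prod_times_sum_divide; use K y' in blast)+
  have PQ: "?D * ?SP * ?SQ = (\<Sum>k\<in>K. (\<Prod>j\<in>K - {k}. y j ^ R) * (P k * Q k) / y k ^ R)
      + (\<Sum>k\<in>K. \<Sum>k'\<in>K - {k}. (\<Prod>j\<in>K - {k} - {k'}. y j ^ R) * (P k * Q k'))"
    by (rule prod_times_sum_divide_product; use K y' in blast)
  have "?D * (?SP + a) * (?SQ + b) = ?D * ?SP * ?SQ + (?D * ?SP) * b + (?D * ?SQ) * a + ?D * a * b"
    by (simp add: algebra_simps)
  also have "\<dots> = (\<Sum>k\<in>K. (\<Prod>j\<in>K - {k}. y j ^ R) * (P k * Q k) / y k ^ R)
      + cross_terms R K y P Q a b + ?D * a * b"
    unfolding cross_terms_def PQ unfolding P Q by (simp add: sum_distrib_right add_ac)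
  finally show ?thesis .
qed

lemma poly_deg_on_cross_terms:
  fixes c :: "'k \<Rightarrow> 'a::comm_ring_1"
  assumes K: "finite K" "card K = \<kappa>"
    and P: "\<And>k. k \<in> K \<Longrightarrow> poly_deg_on U \<alpha> dP (P k)"
    and Q: "\<And>k. k \<in> K \<Longrightarrow> poly_deg_on U \<alpha> dQ (Q k)"
    and a: "poly_deg_on U \<alpha> dA a" and b: "poly_deg_on U \<alpha> dB b"
    and D: "2 \<le> \<kappa> \<Longrightarrow> R * (\<kappa> - 2) + (dP + dQ) \<le> D" "R * (\<kappa> - 1) + (dP + dB) \<le> D"
           "R * (\<kappa> - 1) + (dQ + dA) \<le> D"
  shows "poly_deg_on U \<alpha> D
    (\<lambda>s. cross_terms R K (\<lambda>j. c j - \<alpha> s) (\<lambda>k. P k s) (\<lambda>k. Q k s) (a s) (b s))"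
proof -
  have prod: "poly_deg_on U \<alpha> (R * card J) (\<lambda>s. \<Prod>j\<in>J. (c j - \<alpha> s) ^ R)" if "J \<subseteq> K" for J
    using finite_subset[OF that K(1)] by (intro poly_deg_on_prod poly_deg_on_shifted_power)
  have card1: "card (K - {k}) = \<kappa> - 1" if "k \<in> K" for k
    using that K by (simp add: card_Diff_singleton)
  have card2: "card (K - {k} - {k'}) = \<kappa> - 2 \<and> 2 \<le> \<kappa>" if "k \<in> K" "k' \<in> K - {k}" for k k'
  proof
    show "card (K - {k} - {k'}) = \<kappa> - 2" using that K by (simp add: card_Diff_singleton)
    have "card {k, k'} \<le> card K" using that K by (intro card_mono) auto
    moreover have "card {k, k'} = 2" using that by auto
    ultimately show "2 \<le> \<kappa>" using K by simp
  qed
  show ?thesis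
    unfolding cross_terms_def
  proof (intro poly_deg_on_add poly_deg_on_sum K finite_Diff)
    fix k k' assume "k \<in> K" "k' \<in> K - {k}"
    then show "poly_deg_on U \<alpha> D (\<lambda>s. (\<Prod>j\<in>K - {k} - {k'}. (c j - \<alpha> s) ^ R) * (P k s * Q k' s))"
      using card2 D(1)
      by (intro poly_deg_on_mono[OF poly_deg_on_mult[OF prod poly_deg_on_mult[OF P Q]]]) auto
  next
    fix k assume "k \<in> K"
    then show "poly_deg_on U \<alpha> D (\<lambda>s. (\<Prod>j\<in>K - {k}. (c j - \<alpha> s) ^ R) * P k s * b s)"
      using card1 D(2)
      by (intro poly_deg_on_mono[OF poly_deg_on_mult[OF poly_deg_on_mult[OF prod P] b]]) auto
  next
    fix k assume "k \<in> K"
    then show "poly_deg_on U \<alpha> D (\<lambda>s. (\<Prod>j\<in>K - {k}. (c j - \<alpha> s) ^ R) * Q k s * a s)"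
      using card1 D(3)
      by (intro poly_deg_on_mono[OF poly_deg_on_mult[OF poly_deg_on_mult[OF prod Q] a]]) auto
  qed
qed

definition Cpoly :: "nat \<Rightarrow> nat \<Rightarrow> nat \<Rightarrow> nat \<Rightarrow> nat \<Rightarrow> nat \<Rightarrow> (nat \<Rightarrow> nat \<Rightarrow> 'a::comm_semiring_1 fmat)
    \<Rightarrow> (nat \<Rightarrow> nat \<Rightarrow> 'a fmat) \<Rightarrow> nat \<Rightarrow> nat \<Rightarrow> nat \<Rightarrow> nat \<Rightarrow> 'a poly" where
  "Cpoly p m n lam kap mu A B l k r c =
     (\<Sum>i\<le>Rp p m n + p - 2. monom (Cmat p m n lam kap mu A B l k (i + 1) r c) i)"

lemma coeff_Cpoly:
  "i \<le> Rp p m n + p - 2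
    \<Longrightarrow> coeff (Cpoly p m n lam kap mu A B l k r c) i = Cmat p m n lam kap mu A B l k (i + 1) r c"
  unfolding Cpoly_def by (simp add: coeff_sum coeff_monom)

lemma degree_Cpoly: "degree (Cpoly p m n lam kap mu A B l k r c) \<le> Rp p m n + p - 2"
  unfolding Cpoly_def by (rule degree_le) (auto simp: coeff_sum coeff_monom)

lemma mmul_Pmat_Qmat_eq_poly_Cpoly:
  fixes f :: "nat \<Rightarrow> nat \<Rightarrow> 'a::field"
  assumes "0 < p" "0 < m" "0 < n"
  shows "mmul (kap div p) (Pmat p m lam kap f \<alpha> A l k s) (Qmat p m n kap mu f \<alpha> B l k s) r c
       = poly (Cpoly p m n lam kap mu A B l k r c) (f l k - \<alpha> s)"
  unfolding Pmat_mmul_Qmat[OF assms] Cpoly_def by (simp add: poly_sum poly_monom)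

definition pole_part :: "nat \<Rightarrow> nat \<Rightarrow> (nat \<Rightarrow> nat \<Rightarrow> 'a::field) \<Rightarrow> (nat \<Rightarrow> 'a) \<Rightarrow> nat \<Rightarrow> nat \<Rightarrow> nat
    \<Rightarrow> (nat \<Rightarrow> 'a) \<Rightarrow> 'a" where
  "pole_part Kc R f \<alpha> l k s D =
     (\<Sum>i<R. (\<Sum>i'\<le>i. cc Kc R f l k (i - i') * D (i' + 1)) / (f l k - \<alpha> s) ^ (R - i))"

lemma pole_part_add:
  "pole_part Kc R f \<alpha> l k s (\<lambda>j. D j + E j) = pole_part Kc R f \<alpha> l k s D + pole_part Kc R f \<alpha> l k s E"
  unfolding pole_part_def by (simp add: distrib_left sum.distrib add_divide_distrib)

lemma Psi_mmul_Pmat_Qmat_split: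
  fixes f :: "nat \<Rightarrow> nat \<Rightarrow> 'a::field"
  assumes "0 < p" "0 < m" "0 < n" and nz: "f l k \<noteq> \<alpha> s"
  defines "R \<equiv> Rp p m n"
  shows "(\<Prod>j\<in>{1..Kc} - {k}. (f l j - \<alpha> s) ^ R)
        * mmul (kap div p) (Pmat p m lam kap f \<alpha> A l k s) (Qmat p m n kap mu f \<alpha> B l k s) r c
        / (f l k - \<alpha> s) ^ R
     = pole_part Kc R f \<alpha> l k s (\<lambda>j. Cmat p m n lam kap mu A B l k j r c)
       + poly (poly_shift R (Cpoly p m n lam kap mu A B l k r c * Psi Kc R f l k)) (f l k - \<alpha> s)"
proof -
  let ?U = "Cpoly p m n lam kap mu A B l k r c * Psi Kc R f l k"
  have "coeff ?U i = (\<Sum>i'\<le>i. cc Kc R f l k (i - i') * Cmat p m n lam kap mu A B l k (i' + 1) r c)"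
    if "i < R" for i
    unfolding coeff_mult cc_def
    using that \<open>0 < p\<close> by (intro sum.cong refl) (simp add: coeff_Cpoly R_def)
  then have "(\<Sum>i<R. coeff ?U i / (f l k - \<alpha> s) ^ (R - i))
      = pole_part Kc R f \<alpha> l k s (\<lambda>j. Cmat p m n lam kap mu A B l k j r c)"
    unfolding pole_part_def by simp
  moreover have "poly ?U (f l k - \<alpha> s)
      = (\<Prod>j\<in>{1..Kc} - {k}. (f l j - \<alpha> s) ^ R)
        * mmul (kap div p) (Pmat p m lam kap f \<alpha> A l k s) (Qmat p m n kap mu f \<alpha> B l k s) r c"
    by (simp add: mmul_Pmat_Qmat_eq_poly_Cpoly[OF assms(1-3)] poly_Psi)
  ultimately show ?thesis
    using poly_divide_power_split[of "f l k - \<alpha> s" ?U R] nz by (metis right_minus_eq)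
qed

lemma degree_poly_shift_Cpoly_Psi:
  fixes p m n :: nat
  assumes "0 < p" "0 < m" "0 < n" "k \<in> {1..Kc}"
  defines "R \<equiv> Rp p m n"
  shows "degree (poly_shift R (Cpoly p m n lam kap mu A B l k r c * Psi Kc R f l k))
    \<le> R * (Kc - 1) + p - 2"
proof -
  have "degree (Cpoly p m n lam kap mu A B l k r c * Psi Kc R f l k) \<le> (R + p - 2) + R * (Kc - 1)"
    using degree_Cpoly degree_Psi[OF assms(4)] unfolding R_def
    by (intro order_trans[OF degree_mult_le] add_mono)
  moreover have "p \<le> R" unfolding R_def Rp_def using assms(2,3) by simp
  ultimately show ?thesis
    using degree_poly_shift[of R "Cpoly p m n lam kap mu A B l k r c * Psi Kc R f l k"] assms(1)
    by linarith
qed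

lemma mmul_Atil_Btil_expand:
  fixes f :: "nat \<Rightarrow> nat \<Rightarrow> 'a::field" and ZA ZB :: "nat \<Rightarrow> nat \<Rightarrow> 'a fmat" and X r c :: nat
  assumes "0 < p" "0 < m" "0 < n" and nz: "\<And>k. k \<in> {1..Kc} \<Longrightarrow> f l k \<noteq> \<alpha> s"
  defines "R \<equiv> Rp p m n" and "K \<equiv> {1..Kc}"
    and "a \<equiv> \<lambda>t. \<Sum>x\<in>{1..X}. \<alpha> s ^ (x - 1) * ZA l x r t"
    and "b \<equiv> \<lambda>t. \<Sum>x\<in>{1..X}. \<alpha> s ^ (x - 1) * ZB l x t c"
  shows "mmul (kap div p) (Atil p m n lam kap X Kc f \<alpha> A ZA l s) (Btil p m n kap mu X Kc f \<alpha> B ZB l s) r c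
    = (\<Sum>k\<in>K. pole_part Kc R f \<alpha> l k s (\<lambda>j. Cmat p m n lam kap mu A B l k j r c))
      + (\<Sum>k\<in>K. poly (poly_shift R (Cpoly p m n lam kap mu A B l k r c * Psi Kc R f l k)) (f l k - \<alpha> s))
      + (\<Sum>t<kap div p. cross_terms R K (\<lambda>j. f l j - \<alpha> s)
           (\<lambda>k. Pmat p m lam kap f \<alpha> A l k s r t) (\<lambda>k. Qmat p m n kap mu f \<alpha> B l k s t c) (a t) (b t))
      + (\<Sum>t<kap div p. Delta Kc R f l (\<alpha> s) * a t * b t)"
proof -
  define y where "y = (\<lambda>j. f l j - \<alpha> s)"
  define P where "P k t = Pmat p m lam kap f \<alpha> A l k s r t" for k t
  define Q where "Q k t = Qmat p m n kap mu f \<alpha> B l k s t c" for k t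
  have y: "y k \<noteq> 0" if "k \<in> K" for k using nz that unfolding y_def K_def by simp
  have Delta: "Delta Kc R f l (\<alpha> s) = (\<Prod>j\<in>K. y j ^ R)"
    unfolding Delta_def K_def y_def ..
  have entry: "Atil p m n lam kap X Kc f \<alpha> A ZA l s r t * Btil p m n kap mu X Kc f \<alpha> B ZB l s t c
      = (\<Sum>k\<in>K. (\<Prod>j\<in>K - {k}. y j ^ R) * (P k t * Q k t) / y k ^ R)
        + cross_terms R K y (\<lambda>k. P k t) (\<lambda>k. Q k t) (a t) (b t) + Delta Kc R f l (\<alpha> s) * a t * b t" for t
  proof -
    have "Atil p m n lam kap X Kc f \<alpha> A ZA l s r t * Btil p m n kap mu X Kc f \<alpha> B ZB l s t c
        = (\<Prod>j\<in>K. y j ^ R) * ((\<Sum>k\<in>K. P k t / y k ^ R) + a t) * ((\<Sum>k\<in>K. Q k t / y k ^ R) + b t)"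
      unfolding Atil_def Btil_def Delta_def by (simp add: y_def P_def Q_def a_def b_def R_def K_def)
    also have "\<dots> = (\<Sum>k\<in>K. (\<Prod>j\<in>K - {k}. y j ^ R) * (P k t * Q k t) / y k ^ R)
        + cross_terms R K y (\<lambda>k. P k t) (\<lambda>k. Q k t) (a t) (b t) + (\<Prod>j\<in>K. y j ^ R) * a t * b t"
      by (rule prod_times_sums_expand) (use y in \<open>auto simp: K_def\<close>)
    finally show ?thesis unfolding Delta .
  qed
  have diagonal: "(\<Sum>t<kap div p. \<Sum>k\<in>K. (\<Prod>j\<in>K - {k}. y j ^ R) * (P k t * Q k t) / y k ^ R)
      = (\<Sum>k\<in>K. pole_part Kc R f \<alpha> l k s (\<lambda>j. Cmat p m n lam kap mu A B l k j r c))
        + (\<Sum>k\<in>K. poly (poly_shift R (Cpoly p m n lam kap mu A B l k r c * Psi Kc R f l k)) (y k))"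
    unfolding sum.distrib[symmetric]
  proof (subst sum.swap, rule sum.cong[OF refl])
    fix k assume "k \<in> K"
    then have "f l k \<noteq> \<alpha> s" using nz unfolding K_def by blast
    then show "(\<Sum>t<kap div p. (\<Prod>j\<in>K - {k}. y j ^ R) * (P k t * Q k t) / y k ^ R)
        = pole_part Kc R f \<alpha> l k s (\<lambda>j. Cmat p m n lam kap mu A B l k j r c)
          + poly (poly_shift R (Cpoly p m n lam kap mu A B l k r c * Psi Kc R f l k)) (y k)"
      using Psi_mmul_Pmat_Qmat_split[OF assms(1-3), where Kc = Kc and kap = kap and A = A
          and mu = mu and B = B and r = r and c = c and lam = lam]
      unfolding K_def y_def P_def Q_def R_def mmul_def
      by (simp add: sum_distrib_left sum_divide_distrib)
  qed
  show ?thesis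
    unfolding mmul_def entry sum.distrib diagonal by (simp add: y_def P_def Q_def)
qed

lemma DE_bounds:
  assumes "0 < p" "0 < m" "0 < n"
  shows "p * m - 1 \<le> DE p m n" "Rp p m n - p * m + p - 1 \<le> DE p m n" "DE p m n < Rp p m n"
proof -
  have "p \<le> p * m" "p * m \<le> p * m * n" "0 < p * m" using assms by simp_all
  then show "p * m - 1 \<le> DE p m n" "Rp p m n - p * m + p - 1 \<le> DE p m n" "DE p m n < Rp p m n"
    unfolding DE_def Rp_def max_def by (auto simp only: split: if_split; linarith)+
qed

lemma poly_deg_on_Pmat: "poly_deg_on U \<alpha> (p * m - 1) (\<lambda>s. Pmat p m lam kap f \<alpha> A l k s r t)"
  unfolding Pmat_def
proof (intro poly_deg_on_sum finite_atLeastAtMost)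
  fix m' p' assume "m' \<in> {1..m}" "p' \<in> {1..p}"
  then have "p * (m' - 1) \<le> p * m - p" "1 \<le> p'" "p' \<le> p" "p \<le> p * m"
    using mult_le_mono2[of "m' - 1" "m - 1" p] by (auto simp: diff_mult_distrib2)
  then have "p' - 1 + p * (m' - 1) \<le> p * m - 1" by linarith
  then show "poly_deg_on U \<alpha> (p * m - 1)
      (\<lambda>s. blk (lam div m) (kap div p) (A l k) m' p' r t * (f l k - \<alpha> s) ^ (p' - 1 + p * (m' - 1)))"
    by (intro poly_deg_on_scale poly_deg_on_mono[OF poly_deg_on_shifted_power])
qed

lemma poly_deg_on_Qmat:
  "poly_deg_on U \<alpha> (Rp p m n - p * m + p - 1) (\<lambda>s. Qmat p m n kap mu f \<alpha> B l k s t c)"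
  unfolding Qmat_def
proof (intro poly_deg_on_sum finite_atLeastAtMost)
  fix p'' n'' assume "p'' \<in> {1..p}" "n'' \<in> {1..n}"
  then have "p * m * (n'' - 1) \<le> p * m * n - p * m" "1 \<le> p''" "p'' \<le> p"
    using mult_le_mono2[of "n'' - 1" "n - 1" "p * m"] by (auto simp: diff_mult_distrib2)
  then have "p - p'' + p * m * (n'' - 1) \<le> Rp p m n - p * m + p - 1" unfolding Rp_def by linarith
  then show "poly_deg_on U \<alpha> (Rp p m n - p * m + p - 1)
      (\<lambda>s. blk (kap div p) (mu div n) (B l k) p'' n'' t c * (f l k - \<alpha> s) ^ (p - p'' + p * m * (n'' - 1)))"
    by (intro poly_deg_on_scale poly_deg_on_mono[OF poly_deg_on_shifted_power])
qed

lemma mmul_Atil_Btil_decomposition: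
  fixes f :: "nat \<Rightarrow> nat \<Rightarrow> 'a::field"
  assumes pos: "0 < p" "0 < m" "0 < n" "0 < X"
    and nz: "\<And>k s. k \<in> {1..Kc} \<Longrightarrow> s \<in> U \<Longrightarrow> f l k \<noteq> \<alpha> s"
  shows "poly_deg_on U \<alpha> (Rp p m n * (Kc - 1) + X + DE p m n - 1)
    (\<lambda>s. mmul (kap div p) (Atil p m n lam kap X Kc f \<alpha> A ZA l s) (Btil p m n kap mu X Kc f \<alpha> B ZB l s) r c
       - (\<Sum>k\<in>{1..Kc}. pole_part Kc (Rp p m n) f \<alpha> l k s (\<lambda>j. Cmat p m n lam kap mu A B l k j r c))
       - (\<Sum>t<kap div p. Delta Kc (Rp p m n) f l (\<alpha> s)
            * (\<Sum>x\<in>{1..X}. \<alpha> s ^ (x - 1) * ZA l x r t) * (\<Sum>x\<in>{1..X}. \<alpha> s ^ (x - 1) * ZB l x t c)))"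
    (is "poly_deg_on U \<alpha> ?T ?h")
proof -
  let ?R = "Rp p m n"
  note DE = DE_bounds[OF pos(1-3)]
  have card: "card {1..Kc} = Kc" by simp
  have pm: "p \<le> p * m" "p * m \<le> ?R" using pos unfolding Rp_def by simp_all
  have cross_deg: "?R * (Kc - 2) + (p * m - 1 + (?R - p * m + p - 1)) \<le> ?T" if "2 \<le> Kc"
  proof -
    have "?R * (Kc - 2) + ?R = ?R * (Kc - 1)"
      using that by (metis Suc_diff_Suc Suc_1 diff_Suc_1 less_le_trans lessI mult_Suc_right add.commute)
    then show ?thesis using DE pos pm by linarith
  qed
  have mixed_deg: "?R * (Kc - 1) + (p * m - 1 + (X - 1)) \<le> ?T"
      "?R * (Kc - 1) + (?R - p * m + p - 1 + (X - 1)) \<le> ?T"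
    using DE pos by linarith+
  have "poly_deg_on U \<alpha> ?T (\<lambda>s.
      (\<Sum>k\<in>{1..Kc}. poly (poly_shift ?R (Cpoly p m n lam kap mu A B l k r c * Psi Kc ?R f l k)) (f l k - \<alpha> s))
      + (\<Sum>t<kap div p. cross_terms ?R {1..Kc} (\<lambda>j. f l j - \<alpha> s)
           (\<lambda>k. Pmat p m lam kap f \<alpha> A l k s r t) (\<lambda>k. Qmat p m n kap mu f \<alpha> B l k s t c)
           (\<Sum>x\<in>{1..X}. \<alpha> s ^ (x - 1) * ZA l x r t) (\<Sum>x\<in>{1..X}. \<alpha> s ^ (x - 1) * ZB l x t c)))"
  proof (intro poly_deg_on_add poly_deg_on_sum finite_atLeastAtMost finite_lessThan)
    fix k assume "k \<in> {1..Kc}"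
    then have "degree (poly_shift ?R (Cpoly p m n lam kap mu A B l k r c * Psi Kc ?R f l k)) \<le> ?T"
      using degree_poly_shift_Cpoly_Psi[OF pos(1-3), where lam = lam and kap = kap and mu = mu
          and A = A and B = B and r = r and c = c and f = f and l = l] DE pos pm
      by fastforce
    then show "poly_deg_on U \<alpha> ?T
        (\<lambda>s. poly (poly_shift ?R (Cpoly p m n lam kap mu A B l k r c * Psi Kc ?R f l k)) (f l k - \<alpha> s))"
      by (rule poly_deg_on_mono[OF poly_deg_on_poly_shifted])
  next
    fix t
    show "poly_deg_on U \<alpha> ?T (\<lambda>s. cross_terms ?R {1..Kc} (\<lambda>j. f l j - \<alpha> s)
        (\<lambda>k. Pmat p m lam kap f \<alpha> A l k s r t) (\<lambda>k. Qmat p m n kap mu f \<alpha> B l k s t c)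
        (\<Sum>x\<in>{1..X}. \<alpha> s ^ (x - 1) * ZA l x r t) (\<Sum>x\<in>{1..X}. \<alpha> s ^ (x - 1) * ZB l x t c))"
      using poly_deg_on_cross_terms[OF finite_atLeastAtMost card poly_deg_on_Pmat
          poly_deg_on_Qmat poly_deg_on_power_sum poly_deg_on_power_sum cross_deg mixed_deg]
      by simp
  qed
  then show ?thesis
  proof (rule poly_deg_on_cong, goal_cases)
    case (1 s)
    then have "\<And>k. k \<in> {1..Kc} \<Longrightarrow> f l k \<noteq> \<alpha> s" using nz by blast
    from mmul_Atil_Btil_expand[where \<alpha> = \<alpha> and s = s and f = f and l = l, OF pos(1-3) this]
    show ?case by simp
  qed
qed

lemma poly_deg_on_noise_product:
  "poly_deg_on U \<alpha> (Rp p m n * Kc + (X - 1) + (X - 1)) (\<lambda>s. \<Sum>l\<in>{1..ell}. \<Sum>t<kap div p.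
     Delta Kc (Rp p m n) f l (\<alpha> s)
     * (\<Sum>x\<in>{1..X}. \<alpha> s ^ (x - 1) * ZA l x r t) * (\<Sum>x\<in>{1..X}. \<alpha> s ^ (x - 1) * ZB l x t c))"
proof -
  have Delta: "poly_deg_on U \<alpha> (Rp p m n * Kc) (\<lambda>s. Delta Kc (Rp p m n) f l (\<alpha> s))" for l
  proof -
    have "poly_deg_on U \<alpha> (Rp p m n * card {1..Kc}) (\<lambda>s. \<Prod>k\<in>{1..Kc}. (f l k - \<alpha> s) ^ Rp p m n)"
      by (intro poly_deg_on_prod finite_atLeastAtMost poly_deg_on_shifted_power)
    then show ?thesis unfolding Delta_def by simp
  qed
  show ?thesis
    by (intro poly_deg_on_sum finite_atLeastAtMost finite_lessThan
        poly_deg_on_mult[OF poly_deg_on_mult[OF Delta poly_deg_on_power_sum] poly_deg_on_power_sum])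
qed

lemma sum_powers_coeff:
  fixes y :: "'a::comm_ring_1"
  assumes "degree q < N"
  shows "(\<Sum>x\<in>{1..N}. y ^ (x - 1) * coeff q (x - 1)) = poly q y"
proof -
  have "(\<Sum>x\<in>{1..N}. y ^ (x - 1) * coeff q (x - 1)) = (\<Sum>j<N. coeff q j * y ^ j)"
    unfolding One_nat_def sum.atLeast1_atMost_eq by (simp add: mult.commute)
  also have "\<dots> = (\<Sum>j\<le>degree q. coeff q j * y ^ j)"
    using assms by (intro sum.mono_neutral_right) (auto simp: coeff_eq_0)
  finally show ?thesis by (simp add: poly_altdef)
qed

lemma coefficients_split_exist:
  fixes \<alpha> :: "'i \<Rightarrow> 'a::comm_ring_1"
  assumes "0 < T" "T \<le> N"
    and G: "\<And>z. poly_deg_on U \<alpha> (N - 1) (G z)"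
    and H: "\<And>a z. poly_deg_on U \<alpha> (T - 1) (\<lambda>s. H a z s - G z s)"
  shows "\<exists>I. (\<forall>a a' z x. T < x \<longrightarrow> I a z x = I a' z x)
           \<and> (\<forall>a z. \<forall>s\<in>U. H a z s = (\<Sum>x\<in>{1..N}. \<alpha> s ^ (x - 1) * I a z x))"
proof -
  obtain g where g: "\<And>z. degree (g z) \<le> N - 1 \<and> (\<forall>s\<in>U. G z s = poly (g z) (\<alpha> s))"
    using G unfolding poly_deg_on_def by metis
  obtain h where h: "\<And>a z. degree (h a z) \<le> T - 1 \<and> (\<forall>s\<in>U. H a z s - G z s = poly (h a z) (\<alpha> s))"
    using H unfolding poly_deg_on_def by metis
  define I where "I a z x = coeff (g z) (x - 1) + (if x \<le> T then coeff (h a z) (x - 1) else 0)" for a z x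
  have I_coeff: "I a z x = coeff (g z + h a z) (x - 1)" for a z x
    using h[of a z] \<open>0 < T\<close> by (auto simp: I_def coeff_eq_0)
  have degree: "degree (g z + h a z) < N" for a z
  proof -
    have "degree (g z + h a z) \<le> N - 1"
      using g[of z] h[of a z] assms(2) by (intro degree_add_le) auto
    then show ?thesis using assms(1,2) by linarith
  qed
  have "H a z s = (\<Sum>x\<in>{1..N}. \<alpha> s ^ (x - 1) * I a z x)" if "s \<in> U" for a z s
  proof -
    have "H a z s - G z s = poly (h a z) (\<alpha> s)" "G z s = poly (g z) (\<alpha> s)"
      using g[of z] h[of a z] that by auto
    then have "H a z s = poly (g z + h a z) (\<alpha> s)"
      by (metis add.commute diff_eq_eq poly_add)
    also have "\<dots> = (\<Sum>x\<in>{1..N}. \<alpha> s ^ (x - 1) * I a z x)"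
      unfolding I_coeff using sum_powers_coeff[OF degree] by simp
    finally show ?thesis .
  qed
  then show ?thesis by (intro exI[of _ I]) (auto simp: I_def)
qed

lemma sum_powers_add_truncated:
  fixes y :: "'a::comm_ring_1"
  assumes "T \<le> N"
  shows "(\<Sum>x\<in>{1..N}. y ^ (x - 1) * (I x + (if x \<le> T then Z x else 0)))
    = (\<Sum>x\<in>{1..N}. y ^ (x - 1) * I x) + (\<Sum>x\<in>{1..T}. y ^ (x - 1) * Z x)"
proof -
  have "(\<Sum>x\<in>{1..N}. y ^ (x - 1) * (if x \<le> T then Z x else 0)) = (\<Sum>x\<in>{1..T}. y ^ (x - 1) * Z x)"
    using assms by (intro sum.mono_neutral_cong_right) auto
  then show ?thesis by (simp add: distrib_left sum.distrib)
qed

lemma Ymat_split: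
  "Ymat p m n lam kap mu X ell Kc f \<alpha> A B ZA ZB Z' Z'' s r c
    = (\<Sum>l\<in>{1..ell}. mmul (kap div p) (Atil p m n lam kap X Kc f \<alpha> A ZA l s)
                                      (Btil p m n kap mu X Kc f \<alpha> B ZB l s) r c)
      + (\<Sum>x\<in>{1..Rp p m n * (Kc - 1) + X + DE p m n}. \<alpha> s ^ (x - 1) * Z' x r c)
      + (\<Sum>l\<in>{1..ell}. \<Sum>k\<in>{1..Kc}. pole_part Kc (Rp p m n) f \<alpha> l k s (\<lambda>j. Z'' l k j r c))"
  unfolding Ymat_def Mtil_def pole_part_def by simp

lemma Ymat_interpolation:
  fixes f :: "nat \<Rightarrow> nat \<Rightarrow> 'a::field"
  assumes pos: "0 < X" "0 < Kc" "0 < p" "0 < m" "0 < n"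
    and f_\<alpha>: "\<And>l k s. l \<in> {1..ell} \<Longrightarrow> k \<in> {1..Kc} \<Longrightarrow> s \<in> {1..S} \<Longrightarrow> f l k \<noteq> \<alpha> s"
  defines "T \<equiv> Rp p m n * (Kc - 1) + X + DE p m n" and "N \<equiv> Rp p m n * Kc + 2 * X - 1"
  shows "\<exists>I. (\<forall>A B A' B' ZA ZB x. T < x \<longrightarrow> I A B ZA ZB x = I A' B' ZA ZB x)
    \<and> (\<forall>A B ZA ZB Z' Z'' s r c. s \<in> {1..S} \<longrightarrow>
        Ymat p m n lam kap mu X ell Kc f \<alpha> A B ZA ZB Z' Z'' s r c
        = (\<Sum>l\<in>{1..ell}. \<Sum>k\<in>{1..Kc}. pole_part Kc (Rp p m n) f \<alpha> l k s
             (\<lambda>j. Cmat p m n lam kap mu A B l k j r c + Z'' l k j r c))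
          + (\<Sum>x\<in>{1..N}. \<alpha> s ^ (x - 1) * (I A B ZA ZB x r c + (if x \<le> T then Z' x r c else 0))))"
proof -
  define G where "G = (\<lambda>(ZA :: nat \<Rightarrow> nat \<Rightarrow> 'a fmat, ZB :: nat \<Rightarrow> nat \<Rightarrow> 'a fmat, r :: nat, c :: nat) s.
      \<Sum>l\<in>{1..ell}. \<Sum>t<kap div p. Delta Kc (Rp p m n) f l (\<alpha> s)
        * (\<Sum>x\<in>{1..X}. \<alpha> s ^ (x - 1) * ZA l x r t) * (\<Sum>x\<in>{1..X}. \<alpha> s ^ (x - 1) * ZB l x t c))"
  define H where "H = (\<lambda>(A, B) (ZA, ZB, r, c) s.
      (\<Sum>l\<in>{1..ell}. mmul (kap div p) (Atil p m n lam kap X Kc f \<alpha> A ZA l s)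
                                     (Btil p m n kap mu X Kc f \<alpha> B ZB l s) r c)
      - (\<Sum>l\<in>{1..ell}. \<Sum>k\<in>{1..Kc}. pole_part Kc (Rp p m n) f \<alpha> l k s
             (\<lambda>j. Cmat p m n lam kap mu A B l k j r c)))"
  have "Rp p m n * (Kc - 1) + Rp p m n = Rp p m n * Kc" using pos(2) by (cases Kc) auto
  then have TN: "0 < T" "T \<le> N"
    using DE_bounds(3)[OF pos(3-5)] pos(1) unfolding T_def N_def by linarith+
  have "poly_deg_on {1..S} \<alpha> (N - 1) (G z)" for z
  proof -
    obtain ZA ZB r c where z: "z = (ZA, ZB, r, c)" by (cases z) auto
    have "N - 1 = Rp p m n * Kc + (X - 1) + (X - 1)" using pos(1) unfolding N_def by simp
    then show ?thesis unfolding G_def z prod.case by (simp only: poly_deg_on_noise_product)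
  qed
  moreover have "poly_deg_on {1..S} \<alpha> (T - 1) (\<lambda>s. H a z s - G z s)" for a z
  proof -
    obtain A B ZA ZB r c where "a = (A, B)" "z = (ZA, ZB, r, c)" by (cases a, cases z) auto
    moreover have "poly_deg_on {1..S} \<alpha> (T - 1) (\<lambda>s. \<Sum>l\<in>{1..ell}.
        mmul (kap div p) (Atil p m n lam kap X Kc f \<alpha> A ZA l s) (Btil p m n kap mu X Kc f \<alpha> B ZB l s) r c
        - (\<Sum>k\<in>{1..Kc}. pole_part Kc (Rp p m n) f \<alpha> l k s (\<lambda>j. Cmat p m n lam kap mu A B l k j r c))
        - (\<Sum>t<kap div p. Delta Kc (Rp p m n) f l (\<alpha> s)
            * (\<Sum>x\<in>{1..X}. \<alpha> s ^ (x - 1) * ZA l x r t) * (\<Sum>x\<in>{1..X}. \<alpha> s ^ (x - 1) * ZB l x t c)))"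
      unfolding T_def using f_\<alpha>
      by (intro poly_deg_on_sum finite_atLeastAtMost mmul_Atil_Btil_decomposition pos(3-5,1)) auto
    ultimately show ?thesis
      by (elim poly_deg_on_cong) (simp add: G_def H_def sum_subtractf)
  qed
  ultimately obtain I where I_indep: "\<forall>a a' z x. T < x \<longrightarrow> I a z x = I a' z x"
    and I_sum: "\<forall>a z. \<forall>s\<in>{1..S}. H a z s = (\<Sum>x\<in>{1..N}. \<alpha> s ^ (x - 1) * I a z x)"
    using coefficients_split_exist[OF TN] by blast
  show ?thesis
  proof (intro exI[of _ "\<lambda>A B ZA ZB x r c. I (A, B) (ZA, ZB, r, c) x"] conjI allI impI)
    fix A B ZA ZB Z' Z'' s r c assume "s \<in> {1..S}"
    then show "Ymat p m n lam kap mu X ell Kc f \<alpha> A B ZA ZB Z' Z'' s r c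
        = (\<Sum>l\<in>{1..ell}. \<Sum>k\<in>{1..Kc}. pole_part Kc (Rp p m n) f \<alpha> l k s
             (\<lambda>j. Cmat p m n lam kap mu A B l k j r c + Z'' l k j r c))
          + (\<Sum>x\<in>{1..N}. \<alpha> s ^ (x - 1) * (I (A, B) (ZA, ZB, r, c) x + (if x \<le> T then Z' x r c else 0)))"
      using I_sum unfolding Ymat_split pole_part_add sum_powers_add_truncated[OF TN(2)] sum.distrib
      by (simp add: H_def T_def algebra_simps)
  qed (use I_indep in blast)
qed

theorem mainTheorem2:
  fixes S X ell Kc p m n lam kap mu :: nat
    and f :: "nat \<Rightarrow> nat \<Rightarrow> 'a::{field, finite}"
    and \<alpha> :: "nat \<Rightarrow> 'a"
  assumes pos: "0 < S" "0 < X" "0 < ell" "0 < Kc" "0 < p" "0 < m" "0 < n"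
               "0 < lam" "0 < kap" "0 < mu"
    and dvds: "m dvd lam" "p dvd kap" "n dvd mu"
    and Lbound: "ell * Kc \<le> card (UNIV :: 'a set) - S"
    and f_inj: "inj_on (\<lambda>(l, k). f l k) ({1..ell} \<times> {1..Kc})"
    and \<alpha>_inj: "inj_on \<alpha> {1..S}"
    and f_\<alpha>: "\<And>l k s. l \<in> {1..ell} \<Longrightarrow> k \<in> {1..Kc} \<Longrightarrow> s \<in> {1..S} \<Longrightarrow> f l k \<noteq> \<alpha> s"
  shows
    \<comment> \<open>definition of C: P Q = sum_i C_{i+1} (f - alpha)^i\<close>
    "(\<forall>A B. \<forall>l\<in>{1..ell}. \<forall>k\<in>{1..Kc}. \<forall>s\<in>{1..S}. \<forall>r<lam div m. \<forall>c<mu div n.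
        mmul (kap div p) (Pmat p m lam kap f \<alpha> A l k s) (Qmat p m n kap mu f \<alpha> B l k s) r c
        = (\<Sum>i\<le>Rp p m n + p - 2. Cmat p m n lam kap mu A B l k (i + 1) r c * (f l k - \<alpha> s) ^ i))
     \<and> \<comment> \<open>(a)\<close>
     (\<forall>(A :: nat \<Rightarrow> nat \<Rightarrow> 'a fmat) B. \<forall>l\<in>{1..ell}. \<forall>k\<in>{1..Kc}. \<forall>m'\<in>{1..m}. \<forall>n''\<in>{1..n}. \<forall>r<lam div m. \<forall>c<mu div n.
        Cmat p m n lam kap mu A B l k (p + p * (m' - 1) + p * m * (n'' - 1)) r c
          = (\<Sum>p'\<in>{1..p}. mmul (kap div p) (blk (lam div m) (kap div p) (A l k) m' p')
                                           (blk (kap div p) (mu div n) (B l k) p' n'') r c)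
        \<and> Cmat p m n lam kap mu A B l k (p + p * (m' - 1) + p * m * (n'' - 1)) r c
          = blk (lam div m) (mu div n) (mmul kap (A l k) (B l k)) m' n'' r c)
     \<and> \<comment> \<open>(b)\<close>
     (\<exists>I :: (nat \<Rightarrow> nat \<Rightarrow> 'a fmat) \<Rightarrow> (nat \<Rightarrow> nat \<Rightarrow> 'a fmat) \<Rightarrow> (nat \<Rightarrow> nat \<Rightarrow> 'a fmat)
              \<Rightarrow> (nat \<Rightarrow> nat \<Rightarrow> 'a fmat) \<Rightarrow> nat \<Rightarrow> 'a fmat.
        (\<forall>A B A' B' ZA ZB. \<forall>x. Rp p m n * (Kc - 1) + X + DE p m n < x \<longrightarrow>
            I A B ZA ZB x = I A' B' ZA ZB x)
        \<and> (\<forall>A B ZA ZB Z' Z''.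
             (\<forall>l\<in>{1..ell}. \<forall>k\<in>{1..Kc}. \<forall>i\<in>Eset p m n. \<forall>r<lam div m. \<forall>c<mu div n. Z'' l k i r c = 0)
             \<longrightarrow> (\<forall>s\<in>{1..S}. \<forall>r<lam div m. \<forall>c<mu div n.
                   Ymat p m n lam kap mu X ell Kc f \<alpha> A B ZA ZB Z' Z'' s r c
                   = (\<Sum>l\<in>{1..ell}. \<Sum>k\<in>{1..Kc}. \<Sum>i<Rp p m n.
                        (\<Sum>i'\<le>i. cc Kc (Rp p m n) f l k (i - i')
                                   * (Cmat p m n lam kap mu A B l k (i' + 1) r c + Z'' l k (i' + 1) r c))
                        / (f l k - \<alpha> s) ^ (Rp p m n - i))
                     + (\<Sum>x\<in>{1..Rp p m n * Kc + 2 * X - 1}. \<alpha> s ^ (x - 1) *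
                        (I A B ZA ZB x r c
                         + (if x \<le> Rp p m n * (Kc - 1) + X + DE p m n then Z' x r c else 0))))))"
proof (intro conjI, goal_cases)
  case 1
  show ?case using Pmat_mmul_Qmat[OF pos(5-7)] by blast
next
  case 2
  show ?case
    by (intro allI ballI impI conjI Cmat_diagonal[OF pos(5)]
        trans[OF Cmat_diagonal[OF pos(5)] blk_mmul[OF dvds(2)]]) assumption+
next
  case 3
  show ?case
  proof (rule exE[OF Ymat_interpolation[OF pos(2,4-7), where f = f and \<alpha> = \<alpha> and ell = ell
        and S = S and lam = lam and kap = kap and mu = mu]], goal_cases)
    case 1
    then show ?case by (rule f_\<alpha>)
  next
    case (2 I)
    then show ?case unfolding pole_part_def
      by (intro exI[of _ I] conjI allI impI ballI) (blast, simp)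
  qed
qed

end
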